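(* Let $X$ be a finite-dimensional normed space and let $(A_n)_{n\in\mathbb N}$ be a sequence of unbounded connected subsets of $X$. Then either $\bigcap_{n\in\mathbb N}A_n=\emptyset$, or for all but finitely many $k\in\mathbb N$ and every $\varepsilon>0$ there is an infinite subset $N_k\subset\mathbb N$ such that $T_k\cap\bigcap_{n\in N_k}A_n^\varepsilon\neq\emptyset$.
   Context: For a set $A\subset X$ and $\varepsilon>0$, $A^\varepsilon=\{x\in X:\mathrm{dist}(x,A)\le\varepsilon\}$. For $k\in\mathbb N$, $T_k=\{x\in X: k\le\|x\|\le k+1\}$. *)

theory Defs
  imports "HOL-Analysis.Analysis"
begin

definition thick :: "'a::metric_space set \<Rightarrow> real \<Rightarrow> 'a set" where
  "thick A \<epsilon> = {x. infdist x A \<le> \<epsilon>}"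

definition shell :: "nat \<Rightarrow> 'a::real_normed_vector set" where
  "shell k = {x. real k \<le> norm x \<and> norm x \<le> real k + 1}"

end

theory Submission
  imports Defs
begin

text \<open>Pick a common point \<open>x\<^sub>0\<close> of all \<open>A n\<close>. For \<open>k \<ge> \<parallel>x\<^sub>0\<parallel>\<close>, each \<open>A n\<close> is connected,
  contains \<open>x\<^sub>0\<close> and is unbounded, so it meets the sphere of radius \<open>k\<close>, say in \<open>y n\<close>.
  The sphere is compact because the space is finite-dimensional, so some point \<open>l\<close> of it
  has infinitely many \<open>y n\<close> within distance \<open>\<epsilon>\<close>; these \<open>n\<close> form the required set, and
  \<open>l\<close> lies in the shell \<open>T\<^sub>k\<close> and in every \<open>A\<^sub>n\<^sup>\<epsilon>\<close>.\<close>

lemma closed_if_compact_Int_cballs: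
  fixes S :: "'a::real_normed_vector set"
  assumes "\<And>R. compact (S \<inter> cball 0 R)"
  shows "closed S"
  unfolding closed_sequential_limits
proof (intro allI impI)
  fix x l assume x: "(\<forall>n. x n \<in> S) \<and> x \<longlonglongrightarrow> l"
  then have "bounded (range x)" using convergent_imp_bounded by blast
  then obtain R where "\<forall>n. norm (x n) \<le> R" unfolding bounded_iff by auto
  with x have "\<forall>n. x n \<in> S \<inter> cball 0 R" by auto
  moreover have "closed (S \<inter> cball 0 R)" using assms compact_imp_closed by blast
  ultimately have "l \<in> S \<inter> cball 0 R" using x closed_sequential_limits by blast
  then show "l \<in> S" by simp
qed

lemma abs_scale_infdist_span_le_norm:
  fixes b z :: "'a::real_normed_vector"
  assumes "z \<in> span B"
  shows "\<bar>t\<bar> * infdist b (span B) \<le> norm (t *\<^sub>R b + z)"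
proof (cases "t = 0")
  case False
  have "- ((1/t) *\<^sub>R z) \<in> span B" using assms by (simp add: span_neg span_scale)
  then have "infdist b (span B) \<le> dist b (- ((1/t) *\<^sub>R z))" by (rule infdist_le)
  also have "\<dots> = norm ((1/t) *\<^sub>R (t *\<^sub>R b + z))"
    using False by (simp add: dist_norm algebra_simps)
  also have "\<dots> = norm (t *\<^sub>R b + z) / \<bar>t\<bar>" by simp
  finally show ?thesis using False by (simp add: field_simps)
qed simp

text \<open>Adding a vector \<open>b \<notin> span B\<close> to \<open>B\<close>: the ball in the bigger span is a continuous image
  of a compact box \<open>[-R/d, R/d] \<times> (span B \<inter> cball)\<close>, where \<open>d > 0\<close> is the distance
  from \<open>b\<close> to the closed set \<open>span B\<close>.\<close>

lemma compact_span_Int_cball: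
  fixes B :: "'a::real_normed_vector set"
  assumes "finite B"
  shows "compact (span B \<inter> cball 0 R)"
  using assms
proof (induction B arbitrary: R rule: finite_induct)
  case empty
  have "span {} \<inter> cball (0::'a) R \<subseteq> {0}" by auto
  then show ?case using finite_subset finite_imp_compact by blast
next
  case (insert b B)
  show ?case
  proof (cases "b \<in> span B")
    case True
    then show ?thesis using insert.IH by (simp add: span_redundant)
  next
    case False
    define d where "d = infdist b (span B)"
    have "closed (span B)" using insert.IH by (rule closed_if_compact_Int_cballs)
    then have d: "d > 0"
      unfolding d_def using infdist_pos_not_in_closed False span_zero by blast
    define K where "K = {-R/d..R/d} \<times> (span B \<inter> cball 0 (R + R/d * norm b))"
    define f where "f = (\<lambda>p::real \<times> 'a. fst p *\<^sub>R b + snd p)"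
    have "compact (f ` K)"
      unfolding K_def f_def using insert.IH
      by (intro compact_continuous_image compact_Times continuous_intros) auto
    moreover have "span (insert b B) \<inter> cball 0 R = f ` K \<inter> cball 0 R"
    proof (intro equalityI subsetI)
      fix v assume v: "v \<in> span (insert b B) \<inter> cball 0 R"
      then obtain t where z: "v - t *\<^sub>R b \<in> span B" using span_breakdown_eq by blast
      have nv: "norm v \<le> R" using v by simp
      have "\<bar>t\<bar> * d \<le> norm v"
        using abs_scale_infdist_span_le_norm[OF z, of t b] unfolding d_def by simp
      then have tR: "\<bar>t\<bar> \<le> R/d" using nv d by (simp add: field_simps)
      have "norm (v - t *\<^sub>R b) \<le> norm v + \<bar>t\<bar> * norm b"
        by (metis norm_scaleR norm_triangle_ineq4)
      also have "\<dots> \<le> R + R/d * norm b"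
        using nv tR by (intro add_mono mult_right_mono) auto
      finally have "(t, v - t *\<^sub>R b) \<in> K" unfolding K_def using tR z by auto
      then show "v \<in> f ` K \<inter> cball 0 R"
        using v unfolding f_def by (auto intro!: image_eqI[where x = "(t, v - t *\<^sub>R b)"])
    next
      fix v assume "v \<in> f ` K \<inter> cball 0 R"
      then obtain t z where "z \<in> span B" "v = t *\<^sub>R b + z" "v \<in> cball 0 R"
        unfolding f_def K_def by force
      moreover from this have "v - t *\<^sub>R b \<in> span B" by simp
      ultimately show "v \<in> span (insert b B) \<inter> cball 0 R"
        using span_breakdown_eq by blast
    qed
    ultimately show ?thesis by (simp add: compact_Int_closed)
  qed
qed

corollary compact_cball_finite_dimensional:
  fixes B :: "'a::real_normed_vector set"
  assumes "finite B" and "span B = UNIV"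
  shows "compact (cball (0::'a) R)"
  using compact_span_Int_cball[OF assms(1)] assms(2) by simp

lemma connected_unbounded_meets_sphere:
  fixes A :: "'a::real_normed_vector set"
  assumes "connected A" and "\<not> bounded A" and "x \<in> A" and "norm x \<le> r"
  obtains y where "y \<in> A" and "norm y = r"
proof -
  obtain p where p: "p \<in> A" "norm p > r"
    using assms(2) unfolding bounded_iff by (auto simp: not_le)
  have "connected (norm ` A)"
    using assms(1) by (intro connected_continuous_image continuous_intros)
  then have "r \<in> norm ` A"
    using connectedD_interval[OF _ imageI[of x A norm, OF assms(3)] imageI[of p A norm, OF p(1)] assms(4)] p(2) by simp
  then show thesis using that by blast
qed

lemma compact_infinitely_often_near:
  fixes y :: "nat \<Rightarrow> 'a::metric_space"
  assumes "compact K" and "\<And>n. y n \<in> K" and "\<epsilon> > 0"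
  obtains l where "l \<in> K" and "infinite {n. dist (y n) l < \<epsilon>}"
proof -
  obtain l r where l: "l \<in> K" and r: "strict_mono r" and lim: "(y \<circ> r) \<longlonglongrightarrow> l"
    using seq_compactE[OF compact_imp_seq_compact[OF assms(1)]] assms(2) by blast
  obtain M where M: "\<And>m. m \<ge> M \<Longrightarrow> dist ((y \<circ> r) m) l < \<epsilon>"
    using lim assms(3) unfolding lim_sequentially by blast
  have "infinite (r ` {M..})"
    using finite_imageD[OF _ strict_mono_imp_inj_on[OF r]] infinite_Ici by blast
  moreover have "r ` {M..} \<subseteq> {n. dist (y n) l < \<epsilon>}" using M by auto
  ultimately show thesis using that l infinite_super by blast
qed

theorem lemma2:
  fixes A :: "nat \<Rightarrow> 'a::real_normed_vector set"
  assumes findim: "\<exists>B. finite B \<and> span B = (UNIV :: 'a set)"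
    and unb: "\<And>n. \<not> bounded (A n)"
    and conn: "\<And>n. connected (A n)"
  shows "(\<Inter>n. A n) = {} \<or>
    (\<forall>\<^sub>F k in sequentially. \<forall>\<epsilon>>0. \<exists>N :: nat set. infinite N \<and>
        shell k \<inter> (\<Inter>n\<in>N. thick (A n) \<epsilon>) \<noteq> {})"
  unfolding disj_imp
proof
  assume "(\<Inter>n. A n) \<noteq> {}"
  then obtain x0 where x0: "\<And>n. x0 \<in> A n" by blast
  obtain B :: "'a set" where B: "finite B" "span B = UNIV" using findim by blast
  have "closed (sphere (0::'a) r)" for r
    unfolding sphere_def by (intro closed_Collect_eq continuous_intros)
  then have "compact (cball 0 r \<inter> sphere (0::'a) r)" for r
    by (intro compact_Int_closed compact_cball_finite_dimensional[OF B])
  then have sphere: "compact (sphere (0::'a) r)" for r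
    by (simp add: Int_absorb1[OF sphere_cball])
  show "\<forall>\<^sub>F k in sequentially. \<forall>\<epsilon>>0. \<exists>N. infinite N \<and> shell k \<inter> (\<Inter>n\<in>N. thick (A n) \<epsilon>) \<noteq> {}"
  proof (intro eventually_sequentiallyI[of "nat \<lceil>norm x0\<rceil>"] allI impI)
    fix k :: nat and \<epsilon> :: real
    assume "nat \<lceil>norm x0\<rceil> \<le> k" and \<epsilon>: "\<epsilon> > 0"
    then have "norm x0 \<le> real k" by linarith
    then have "\<forall>n. \<exists>y. y \<in> A n \<and> y \<in> sphere 0 k"
      using connected_unbounded_meets_sphere[OF conn unb x0] by (metis mem_sphere_0)
    then obtain y where y: "\<And>n. y n \<in> A n" "\<And>n. y n \<in> sphere 0 k" by metis
    obtain l where l: "l \<in> sphere 0 k" and N: "infinite {n. dist (y n) l < \<epsilon>}"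
      by (rule compact_infinitely_often_near[OF sphere y(2) \<epsilon>])
    have "l \<in> thick (A n) \<epsilon>" if "dist (y n) l < \<epsilon>" for n
      using infdist_le[OF y(1), of l n] that unfolding thick_def by (simp add: dist_commute)
    moreover have "l \<in> shell k" using l unfolding shell_def by simp
    ultimately show "\<exists>N. infinite N \<and> shell k \<inter> (\<Inter>n\<in>N. thick (A n) \<epsilon>) \<noteq> {}"
      using N by blast
  qed
qed

end
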